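(* Let $\Psi$ be a well-formed declarative context. If $\Psi\vdash e\bullet A\Rightarrow\!\!\Rightarrow C$ (by a derivation $\mathcal D$), then there exists a type $B$ such that $\Psi\vdash A\le B\to C$ and $\Psi\vdash e\Leftarrow B$ by a derivation strictly smaller than $\mathcal D$.
   Context: Types $A,B,C ::= 1\mid\alpha\mid\forall\alpha.A\mid A\to B$; monotypes $\sigma,\tau ::= 1\mid\alpha\mid\sigma\to\tau$; declarative contexts $\Psi ::= \cdot\mid\Psi,\alpha\mid\Psi,x:A$. Well-formedness $\Psi\vdash A$: all free type variables of $A$ are declared in $\Psi$. Declarative subtyping $\Psi\vdash A\le B$: least relation with $\alpha\in\Psi\Rightarrow\Psi\vdash\alpha\le\alpha$; $\Psi\vdash1\le1$; ($\Psi\vdash B_1\le A_1$, $\Psi\vdash A_2\le B_2$) $\Rightarrow\Psi\vdash A_1\to A_2\le B_1\to B_2$; ($\Psi\vdash\tau$ monotype, $\Psi\vdash[\tau/\alpha]A\le B$) $\Rightarrow\Psi\vdash\forall\alpha.A\le B$; $\Psi,\beta\vdash A\le B\Rightarrow\Psi\vdash A\le\forall\beta.B$. Terms $e ::= x\mid()\mid\lambda x.e\mid e_1\,e_2\mid(e:A)$. Declarative bidirectional judgments (checking $\Leftarrow$, synthesis $\Rightarrow$, application $e\bullet A\Rightarrow\!\!\Rightarrow C$) are defined mutually by: $(x:A)\in\Psi\Rightarrow\Psi\vdash x\Rightarrow A$; ($\Psi\vdash e\Rightarrow A$, $\Psi\vdash A\le B$) $\Rightarrow\Psi\vdash e\Leftarrow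 B$; ($\Psi\vdash A$, $\Psi\vdash e\Leftarrow A$) $\Rightarrow\Psi\vdash(e:A)\Rightarrow A$; $\Psi\vdash()\Leftarrow1$; $\Psi\vdash()\Rightarrow1$; $\Psi,\alpha\vdash e\Leftarrow A\Rightarrow\Psi\vdash e\Leftarrow\forall\alpha.A$; ($\Psi\vdash\tau$ monotype, $\Psi\vdash e\bullet[\tau/\alpha]A\Rightarrow\!\!\Rightarrow C$) $\Rightarrow\Psi\vdash e\bullet\forall\alpha.A\Rightarrow\!\!\Rightarrow C$; $\Psi,x:A\vdash e\Leftarrow B\Rightarrow\Psi\vdash\lambda x.e\Leftarrow A\to B$; ($\Psi\vdash\sigma\to\tau$ monotypes, $\Psi,x:\sigma\vdash e\Leftarrow\tau$) $\Rightarrow\Psi\vdash\lambda x.e\Rightarrow\sigma\to\tau$; ($\Psi\vdash e_1\Rightarrow A$, $\Psi\vdash e_2\bullet A\Rightarrow\!\!\Rightarrow C$) $\Rightarrow\Psi\vdash e_1\,e_2\Rightarrow C$; $\Psi\vdash e\Leftarrow A\Rightarrow\Psi\vdash e\bullet A\to C\Rightarrow\!\!\Rightarrow C$. Derivation size is the number of rule instances. *)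

theory Defs
  imports Main
begin

section \<open>Types (locally nameless: bound type variables are de Bruijn indices,
  free type variables are names)\<close>

type_synonym tvname = nat
type_synonym vname = nat

datatype ty =
    TUnit
  | TFV tvname
  | TBV nat
  | TAll ty
  | TArr ty ty

fun open_rec :: "nat \<Rightarrow> ty \<Rightarrow> ty \<Rightarrow> ty" where
  "open_rec k t TUnit = TUnit"
| "open_rec k t (TFV a) = TFV a"
| "open_rec k t (TBV i) = (if i = k then t else TBV i)"
| "open_rec k t (TAll A) = TAll (open_rec (Suc k) t A)"
| "open_rec k t (TArr A B) = TArr (open_rec k t A) (open_rec k t B)"

text \<open>[\<tau>/\<alpha>]A for the body A of \<forall>\<alpha>.A\<close>
definition open_typ :: "ty \<Rightarrow> ty \<Rightarrow> ty" where
  "open_typ A t = open_rec 0 t A"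

fun lc_at :: "nat \<Rightarrow> ty \<Rightarrow> bool" where
  "lc_at k TUnit = True"
| "lc_at k (TFV a) = True"
| "lc_at k (TBV i) = (i < k)"
| "lc_at k (TAll A) = lc_at (Suc k) A"
| "lc_at k (TArr A B) = (lc_at k A \<and> lc_at k B)"

fun ftv :: "ty \<Rightarrow> tvname set" where
  "ftv TUnit = {}"
| "ftv (TFV a) = {a}"
| "ftv (TBV i) = {}"
| "ftv (TAll A) = ftv A"
| "ftv (TArr A B) = ftv A \<union> ftv B"

fun mono :: "ty \<Rightarrow> bool" where
  "mono TUnit = True"
| "mono (TFV a) = True"
| "mono (TBV i) = True"
| "mono (TAll A) = False"
| "mono (TArr A B) = (mono A \<and> mono B)"

section \<open>Declarative contexts (most recent entry at the head of the list)\<close>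

datatype entry = TyVar tvname | TmVar vname ty

type_synonym ctx = "entry list"

definition tyvars :: "ctx \<Rightarrow> tvname set" where
  "tyvars \<Psi> = {a. TyVar a \<in> set \<Psi>}"

definition tmvars :: "ctx \<Rightarrow> vname set" where
  "tmvars \<Psi> = {x. \<exists>A. TmVar x A \<in> set \<Psi>}"

definition wf_typ :: "ctx \<Rightarrow> ty \<Rightarrow> bool" where
  "wf_typ \<Psi> A \<longleftrightarrow> lc_at 0 A \<and> ftv A \<subseteq> tyvars \<Psi>"

definition wf_mono :: "ctx \<Rightarrow> ty \<Rightarrow> bool" where
  "wf_mono \<Psi> t \<longleftrightarrow> wf_typ \<Psi> t \<and> mono t"

fun wf_ctx :: "ctx \<Rightarrow> bool" where
  "wf_ctx [] = True"
| "wf_ctx (TyVar a # \<Psi>) = (wf_ctx \<Psi> \<and> a \<notin> tyvars \<Psi>)"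
| "wf_ctx (TmVar x A # \<Psi>) = (wf_ctx \<Psi> \<and> x \<notin> tmvars \<Psi> \<and> wf_typ \<Psi> A)"

datatype tm =
    Var vname
  | UnitE
  | Lam vname tm
  | App tm tm
  | Anno tm ty

fun ftv_tm :: "tm \<Rightarrow> tvname set" where
  "ftv_tm (Var x) = {}"
| "ftv_tm UnitE = {}"
| "ftv_tm (Lam x e) = ftv_tm e"
| "ftv_tm (App e1 e2) = ftv_tm e1 \<union> ftv_tm e2"
| "ftv_tm (Anno e A) = ftv_tm e \<union> ftv A"

section \<open>Declarative subtyping, indexed by derivation size (number of rule instances)\<close>

text \<open>The variable introduced by the \<forall>-right rule is chosen fresh (Barendregt convention).\<close>
inductive sub :: "ctx \<Rightarrow> ty \<Rightarrow> ty \<Rightarrow> nat \<Rightarrow> bool" where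
  SubVar: "a \<in> tyvars \<Psi> \<Longrightarrow> sub \<Psi> (TFV a) (TFV a) 1"
| SubUnit: "sub \<Psi> TUnit TUnit 1"
| SubArr: "sub \<Psi> B1 A1 n1 \<Longrightarrow> sub \<Psi> A2 B2 n2 \<Longrightarrow> sub \<Psi> (TArr A1 A2) (TArr B1 B2) (n1 + n2 + 1)"
| SubAllL: "wf_mono \<Psi> t \<Longrightarrow> sub \<Psi> (open_typ A t) B n \<Longrightarrow> sub \<Psi> (TAll A) B (n + 1)"
| SubAllR: "b \<notin> tyvars \<Psi> \<Longrightarrow> b \<notin> ftv A \<Longrightarrow> b \<notin> ftv B \<Longrightarrow>
            sub (TyVar b # \<Psi>) A (open_typ B (TFV b)) n \<Longrightarrow> sub \<Psi> A (TAll B) (n + 1)"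

section \<open>Declarative bidirectional typing, indexed by derivation size
  (number of rule instances, including those of subtyping subderivations)\<close>

inductive chk :: "ctx \<Rightarrow> tm \<Rightarrow> ty \<Rightarrow> nat \<Rightarrow> bool"
  and syn :: "ctx \<Rightarrow> tm \<Rightarrow> ty \<Rightarrow> nat \<Rightarrow> bool"
  and app :: "ctx \<Rightarrow> tm \<Rightarrow> ty \<Rightarrow> ty \<Rightarrow> nat \<Rightarrow> bool"
where
  DVar: "TmVar x A \<in> set \<Psi> \<Longrightarrow> syn \<Psi> (Var x) A 1"
| DSub: "syn \<Psi> e A n \<Longrightarrow> sub \<Psi> A B m \<Longrightarrow> chk \<Psi> e B (n + m + 1)"
| DAnno: "wf_typ \<Psi> A \<Longrightarrow> chk \<Psi> e A n \<Longrightarrow> syn \<Psi> (Anno e A) A (n + 1)"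
| DUnitChk: "chk \<Psi> UnitE TUnit 1"
| DUnitSyn: "syn \<Psi> UnitE TUnit 1"
| DAllI: "a \<notin> tyvars \<Psi> \<Longrightarrow> a \<notin> ftv A \<Longrightarrow> a \<notin> ftv_tm e \<Longrightarrow>
          chk (TyVar a # \<Psi>) e (open_typ A (TFV a)) n \<Longrightarrow> chk \<Psi> e (TAll A) (n + 1)"
| DAllApp: "wf_mono \<Psi> t \<Longrightarrow> app \<Psi> e (open_typ A t) C n \<Longrightarrow> app \<Psi> e (TAll A) C (n + 1)"
| DLamChk: "chk (TmVar x A # \<Psi>) e B n \<Longrightarrow> chk \<Psi> (Lam x e) (TArr A B) (n + 1)"
| DLamSyn: "wf_mono \<Psi> (TArr s t) \<Longrightarrow> chk (TmVar x s # \<Psi>) e t n \<Longrightarrow>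
            syn \<Psi> (Lam x e) (TArr s t) (n + 1)"
| DAppE: "syn \<Psi> e1 A n \<Longrightarrow> app \<Psi> e2 A C m \<Longrightarrow> syn \<Psi> (App e1 e2) C (n + m + 1)"
| DArrApp: "chk \<Psi> e A n \<Longrightarrow> app \<Psi> e (TArr A C) C (n + 1)"

end

theory Submission
  imports Defs
begin

text \<open>At the arrow rule the type already has the
  shape \<open>B \<rightarrow> C\<close>, so reflexivity of subtyping suffices and the checking premise is a proper
  subderivation. At the \<open>\<forall>\<close>-rule the induction hypothesis gives \<open>[\<tau>/\<alpha>]A \<le> B \<rightarrow> C\<close>, and the
  \<open>\<forall>\<close>-left subtyping rule with the same monotype \<open>\<tau>\<close> lifts it to \<open>\<forall>\<alpha>. A \<le> B \<rightarrow> C\<close>.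
  Reflexivity is proved by induction on the size of the type, since opening a \<open>\<forall>\<close>-body
  with a fresh variable preserves size.\<close>

lemma size_open_rec_TFV [simp]: "size (open_rec k (TFV b) A) = size A"
  by (induction A arbitrary: k) auto

lemma lc_at_mono: "lc_at k t \<Longrightarrow> k \<le> j \<Longrightarrow> lc_at j t"
  by (induction t arbitrary: k j) auto

lemma lc_at_open_rec: "lc_at k t \<Longrightarrow> lc_at (Suc k) A \<Longrightarrow> lc_at k (open_rec k t A)"
proof (induction A arbitrary: k)
  case (TAll A)
  then show ?case using lc_at_mono[of k t "Suc k"] by auto
qed auto

lemma ftv_open_rec_subset: "ftv (open_rec k t A) \<subseteq> ftv A \<union> ftv t"
  by (induction A arbitrary: k) auto

lemma wf_typ_open_typ: "wf_typ \<Psi> (TAll A) \<Longrightarrow> wf_typ \<Psi> t \<Longrightarrow> wf_typ \<Psi> (open_typ A t)"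
  unfolding wf_typ_def open_typ_def
  using lc_at_open_rec[of 0 t A] ftv_open_rec_subset[of 0 t A] by auto

lemma tyvars_Cons_TyVar [simp]: "tyvars (TyVar b # \<Psi>) = insert b (tyvars \<Psi>)"
  by (auto simp: tyvars_def)

lemma finite_tyvars: "finite (tyvars \<Psi>)"
proof -
  have "tyvars \<Psi> = TyVar -` set \<Psi>" by (auto simp: tyvars_def)
  then show ?thesis by (simp add: finite_vimageI inj_def)
qed

lemma finite_ftv: "finite (ftv A)"
  by (induction A) auto

lemma obtain_fresh_tyvar:
  obtains b where "b \<notin> tyvars \<Psi>" "b \<notin> ftv A"
proof -
  have "finite (tyvars \<Psi> \<union> ftv A)" using finite_tyvars finite_ftv by blast
  then show ?thesis using that ex_new_if_finite[OF infinite_UNIV_nat] by blast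
qed

lemma sub_refl: "wf_typ \<Psi> A \<Longrightarrow> \<exists>k. sub \<Psi> A A k"
proof (induction "size A" arbitrary: A \<Psi> rule: less_induct)
  case less
  show ?case
  proof (cases A)
    case TUnit
    then show ?thesis using SubUnit by blast
  next
    case (TFV a)
    then show ?thesis using less.prems SubVar by (auto simp: wf_typ_def)
  next
    case (TBV i)
    then show ?thesis using less.prems by (auto simp: wf_typ_def)
  next
    case (TArr A1 A2)
    with less obtain k1 k2 where "sub \<Psi> A1 A1 k1" "sub \<Psi> A2 A2 k2"
      by (fastforce simp: wf_typ_def)
    then show ?thesis using TArr SubArr by blast
  next
    case (TAll A')
    obtain b where b: "b \<notin> tyvars \<Psi>" "b \<notin> ftv A'" using obtain_fresh_tyvar .
    let ?\<Psi>' = "TyVar b # \<Psi>" and ?body = "open_typ A' (TFV b)"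
    have wf_b: "wf_mono ?\<Psi>' (TFV b)" by (simp add: wf_mono_def wf_typ_def)
    have "wf_typ ?\<Psi>' (TAll A')" using less.prems TAll by (auto simp: wf_typ_def)
    then have "wf_typ ?\<Psi>' ?body" using wf_b wf_typ_open_typ by (auto simp: wf_mono_def)
    moreover have "size ?body < size A" using TAll by (simp add: open_typ_def)
    ultimately obtain k where "sub ?\<Psi>' ?body ?body k" using less.hyps by blast
    then have "sub ?\<Psi>' (TAll A') ?body (k + 1)" using SubAllL wf_b by blast
    then have "sub \<Psi> (TAll A') (TAll A') (k + 1 + 1)"
      using SubAllR[of b \<Psi> "TAll A'" A'] b by auto
    then show ?thesis using TAll by blast
  qed
qed

lemma app_sub_arrow_chk:
  assumes "app \<Psi> e A C n" and "wf_typ \<Psi> A"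
  shows "\<exists>B m. (\<exists>k. sub \<Psi> A (TArr B C) k) \<and> chk \<Psi> e B m \<and> m < n"
  using assms
proof (induction n arbitrary: A rule: less_induct)
  case (less n)
  from less.prems(1) show ?case
  proof (cases rule: app.cases)
    case (DAllApp t A' n')
    have "wf_typ \<Psi> (open_typ A' t)"
      using wf_typ_open_typ less.prems(2) DAllApp by (auto simp: wf_mono_def)
    with less.IH[of n' "open_typ A' t"] DAllApp obtain B m k where
      "sub \<Psi> (open_typ A' t) (TArr B C) k" "chk \<Psi> e B m" "m < n'" by auto
    then show ?thesis using DAllApp SubAllL by fastforce
  next
    case (DArrApp B n')
    obtain k where "sub \<Psi> A A k" using sub_refl less.prems(2) by blast
    then show ?thesis using DArrApp by auto
  qed
qed

theorem mainTheorem17: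
  assumes "wf_ctx \<Psi>"
    and "wf_typ \<Psi> A"
    and "app \<Psi> e A C n"
  shows "\<exists>B m. (\<exists>k. sub \<Psi> A (TArr B C) k) \<and> chk \<Psi> e B m \<and> m < n"
  using app_sub_arrow_chk assms(2,3) by blast

end
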